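(* Let $f\in K[x]$, $Q<R$ in $\mathcal Q$ and $d=\deg_Qf$. Then $\nu(f_{Q,d}-f_{R,d})>\nu(f_{Q,d})$ (in particular $\nu(f_{Q,d})=\nu(f_{R,d})$), $d=\max\{j:\nu_Q(f_{R,j}R^j)=\nu_Q(f)\}$, and $\deg_Rf\le d$.
   Context: Let $(K,v)$ be a valued field, $\Gamma$ the divisible hull of $vK$, embedded in a divisible ordered abelian group $\Lambda$. Let $\nu\colon K[x]\to\Lambda\cup\{\infty\}$ be a valuation extending $v$ which is well-specified, i.e. it is not the case that simultaneously $\nu^{-1}(\infty)=0$, the value group of $\nu$ modulo $\Gamma$ is torsion, and the residue field of $\nu$ is algebraic over that of $v$. For $s\ge0$ let $\partial_s$ be the $s$-th Hasse–Schmidt derivative, defined by $f(x+y)=\sum_{s\ge0}(\partial_sf)y^s$. For nonconstant $f$ with $\nu(f)<\infty$ the level is $\epsilon_\nu(f)=\max\{(\nu(f)-\nu(\partial_sf))/s: s\ge1\}$; $\epsilon_\nu(a)=-\infty$ for $a\in K$. A monic $Q\in K[x]$ is a key polynomial for $\nu$ if $\epsilon_\nu(f)<\epsilon_\nu(Q)$ whenever $\deg f<\deg Q$. For monic $Q$, each $f$ has a unique $Q$-expansion $f=\sum_{i\ge0}f_{Q,i}Q^i$ with $\deg f_{Q,i}<\deg Q$; set $\nu_Q(f)=\min_i\nu(f_{Q,i}Q^i)$ (a valuation with $\nu_Q\le\nu$ for key polynomials $Q$), $S_Q(f)=\{i:\nu(f_{Q,i}Q^i)=\nu_Q(f)\}$,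 $\deg_Qf=\max S_Q(f)$. Fix $m\ge1$ such that the set $\Psi_m$ of key polynomials of degree $m$ for $\nu$ is nonempty and has no element of maximal $\nu$-value. Let $\mathcal Q\subseteq\Psi_m$ be well-ordered by $Q<R\iff\nu(Q)<\nu(R)$ and cofinal in $\Psi_m$ for $\nu$-values. As in the paper, all values $\nu_Q(f)$ ($f\ne0$) lie in $\Gamma$. *)

theory Defs
  imports "HOL-Computational_Algebra.Polynomial" "HOL-Library.Extended"
begin

text \<open>Values live in 'b extended: Fin g for g in Lambda, Pinf for infinity.
  Minf is only used as the level of constants (minus infinity).\<close>

definition nsm :: "nat \<Rightarrow> 'b::ab_group_add \<Rightarrow> 'b" where
  "nsm n g = (\<Sum>i<n. g)"

text \<open>Division by a positive integer in a divisible torsion-free group.\<close>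
definition divn :: "nat \<Rightarrow> 'b::ab_group_add \<Rightarrow> 'b" where
  "divn n g = (THE h. nsm n h = g)"

definition fin_val :: "'b extended \<Rightarrow> 'b" where
  "fin_val e = (case e of Fin b \<Rightarrow> b)"

definition is_field_valuation :: "('a::field \<Rightarrow> 'b::linordered_ab_group_add extended) \<Rightarrow> bool" where
  "is_field_valuation v \<longleftrightarrow> v 0 = Pinf \<and> (\<forall>c. c \<noteq> 0 \<longrightarrow> (\<exists>b. v c = Fin b))
     \<and> (\<forall>a b. v (a * b) = v a + v b) \<and> (\<forall>a b. min (v a) (v b) \<le> v (a + b))"

definition is_poly_valuation :: "('a::field poly \<Rightarrow> 'b::linordered_ab_group_add extended) \<Rightarrow> bool" where
  "is_poly_valuation \<nu> \<longleftrightarrow> \<nu> 0 = Pinf \<and> \<nu> 1 = Fin 0 \<and> (\<forall>f. \<nu> f \<noteq> Minf)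
     \<and> (\<forall>f g. \<nu> (f * g) = \<nu> f + \<nu> g) \<and> (\<forall>f g. min (\<nu> f) (\<nu> g) \<le> \<nu> (f + g))"

definition extends_val :: "('a::field poly \<Rightarrow> 'b extended) \<Rightarrow> ('a \<Rightarrow> 'b extended) \<Rightarrow> bool" where
  "extends_val \<nu> v \<longleftrightarrow> (\<forall>c. \<nu> [:c:] = v c)"

definition value_group :: "('a::field \<Rightarrow> 'b::linordered_ab_group_add extended) \<Rightarrow> 'b set" where
  "value_group v = {b. \<exists>c. c \<noteq> 0 \<and> v c = Fin b}"

definition div_hull :: "('a::field \<Rightarrow> 'b::linordered_ab_group_add extended) \<Rightarrow> 'b set" where
  "div_hull v = {g. \<exists>n>0. nsm n g \<in> value_group v}"

text \<open>Well-specified: not (trivial support, value group of nu torsion mod Gamma,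
  residue field of nu algebraic over that of v).  When the support is trivial,
  nu extends to K(x): its value group consists of the differences nu f - nu g, and
  its residue field consists of the residues of f/g with nu g <= nu f; such a
  residue is algebraic over k_v iff some polynomial sum a_i T^i with v(a_i) >= 0
  and some v(a_i) = 0 (nonzero reduction) vanishes on it, i.e.
  nu (sum a_i f^i g^(n-i)) > nu (g^n).\<close>
definition well_specified :: "('a::field \<Rightarrow> 'b::linordered_ab_group_add extended)
    \<Rightarrow> ('a poly \<Rightarrow> 'b extended) \<Rightarrow> bool" where
  "well_specified v \<nu> \<longleftrightarrow> \<not> (
      (\<forall>f. \<nu> f = Pinf \<longrightarrow> f = 0)
    \<and> (\<forall>f g. f \<noteq> 0 \<longrightarrow> g \<noteq> 0 \<longrightarrow>
          (\<exists>n>0. nsm n (fin_val (\<nu> f) - fin_val (\<nu> g)) \<in> div_hull v))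
    \<and> (\<forall>f g. g \<noteq> 0 \<longrightarrow> \<nu> g \<le> \<nu> f \<longrightarrow>
          (\<exists>n a. (\<forall>i\<le>n. Fin 0 \<le> v (a i)) \<and> (\<exists>i\<le>n. v (a i) = Fin 0)
             \<and> \<nu> (g ^ n) < \<nu> (\<Sum>i\<le>n. smult (a i) (f ^ i * g ^ (n - i))))))"

text \<open>Hasse--Schmidt derivative: f(x+y) = sum_s (hasse s f) y^s.\<close>
definition hasse :: "nat \<Rightarrow> 'a::field poly \<Rightarrow> 'a poly" where
  "hasse s f = coeff (pcompose (map_poly (\<lambda>c. [:c:]) f) [:[:0, 1:], 1:]) s"

text \<open>Level epsilon. Constants get -infinity; for nu f = infinity (not covered by
  the paper's definition) we set infinity.\<close>
definition level :: "('a::field poly \<Rightarrow> 'b::linordered_ab_group_add extended) \<Rightarrow> 'a poly \<Rightarrow> 'b extended" where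
  "level \<nu> f = (if degree f = 0 then Minf
     else if \<nu> f = Pinf then Pinf
     else Max ((\<lambda>s. case \<nu> (hasse s f) of
                      Fin b \<Rightarrow> Fin (divn s (fin_val (\<nu> f) - b))
                    | Pinf \<Rightarrow> Minf | Minf \<Rightarrow> Minf) ` {1..degree f}))"

definition key_poly :: "('a::field poly \<Rightarrow> 'b::linordered_ab_group_add extended) \<Rightarrow> 'a poly \<Rightarrow> bool" where
  "key_poly \<nu> Q \<longleftrightarrow> lead_coeff Q = 1 \<and> (\<forall>f. degree f < degree Q \<longrightarrow> level \<nu> f < level \<nu> Q)"

definition Psi :: "('a::field poly \<Rightarrow> 'b::linordered_ab_group_add extended) \<Rightarrow> nat \<Rightarrow> 'a poly set" where
  "Psi \<nu> m = {Q. key_poly \<nu> Q \<and> degree Q = m}"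

text \<open>Q-expansion coefficients: f = sum_i (qcoeff Q f i) * Q^i with degree < degree Q.\<close>
definition qcoeff :: "'a::field poly \<Rightarrow> 'a poly \<Rightarrow> nat \<Rightarrow> 'a poly" where
  "qcoeff Q f i = (f div Q ^ i) mod Q"

definition nuQ :: "('a::field poly \<Rightarrow> 'b::linordered_ab_group_add extended) \<Rightarrow> 'a poly \<Rightarrow> 'a poly \<Rightarrow> 'b extended" where
  "nuQ \<nu> Q f = Min ((\<lambda>i. \<nu> (qcoeff Q f i * Q ^ i)) ` {..degree f})"

definition SQ :: "('a::field poly \<Rightarrow> 'b::linordered_ab_group_add extended) \<Rightarrow> 'a poly \<Rightarrow> 'a poly \<Rightarrow> nat set" where
  "SQ \<nu> Q f = {i. \<nu> (qcoeff Q f i * Q ^ i) = nuQ \<nu> Q f}"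

definition degQ :: "('a::field poly \<Rightarrow> 'b::linordered_ab_group_add extended) \<Rightarrow> 'a poly \<Rightarrow> 'a poly \<Rightarrow> nat" where
  "degQ \<nu> Q f = Max (SQ \<nu> Q f)"

end

theory Submission
  imports Defs
begin

text \<open>Let \<open>\<gamma> = \<nu>(Q)\<close> and let \<open>e\<close> be the level of \<open>Q\<close>. Polynomials of degree below \<open>m\<close> have level
  below \<open>e\<close> while \<open>Q\<close> attains \<open>e\<close> at some Hasse derivative; comparing Hasse derivatives shows
  that for \<open>g\<close>, \<open>h\<close> of degree below \<open>m\<close> the remainder of \<open>g h\<close> modulo \<open>Q\<close> carries the whole
  value, \<open>\<nu>(g h mod Q) = \<nu>(g h) < \<nu>((g h div Q) Q)\<close>. Consequently \<open>\<nu>\<^sub>Q\<close> is multiplicative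
  and \<open>deg\<^sub>Q\<close> additive, with top \<open>Q\<close>-coefficients multiplying modulo \<open>Q\<close> up to terms of larger
  value. Since \<open>R = Q + (R - Q)\<close> with \<open>deg (R - Q) < m\<close> and \<open>\<nu>(R) > \<gamma>\<close>, the term
  \<open>c R\<^sup>j\<close> (\<open>deg c < m\<close>) has \<open>\<nu>\<^sub>Q\<close>-value \<open>\<nu>(c) + j\<gamma>\<close>, \<open>Q\<close>-degree \<open>j\<close> and top \<open>Q\<close>-coefficient
  close to \<open>c\<close>. Writing \<open>f = \<Sum> f\<^sub>R\<^sub>,\<^sub>j R\<^sup>j\<close>, the largest index \<open>J\<close> minimising \<open>\<nu>(f\<^sub>R\<^sub>,\<^sub>j) + j\<gamma>\<close> is
  therefore \<open>deg\<^sub>Q f\<close>, with \<open>f\<^sub>Q\<^sub>,\<^sub>J\<close> close to \<open>f\<^sub>R\<^sub>,\<^sub>J\<close>; and since \<open>\<nu>(R) > \<gamma>\<close>, the values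
  \<open>\<nu>(f\<^sub>R\<^sub>,\<^sub>j) + j\<nu>(R)\<close> increase even faster beyond \<open>J\<close>, so \<open>deg\<^sub>R f \<le> J\<close>.\<close>

section \<open>Multiples in ordered abelian groups\<close>

lemma nsm_0 [simp]: "nsm 0 g = 0"
  by (simp add: nsm_def)

lemma nsm_Suc [simp]: "nsm (Suc n) g = g + nsm n g"
  by (simp add: nsm_def add.commute)

lemma nsm_zero [simp]: "nsm n (0::'b::ab_group_add) = 0"
  by (simp add: nsm_def)

lemma nsm_add: "nsm (a + b) g = nsm a g + nsm b g"
  by (induction a) (simp_all add: add.assoc)

lemma nsm_add_distrib: "nsm n (g + h) = nsm n g + nsm n (h::'b::ab_group_add)"
  by (induction n) (simp_all add: algebra_simps)

lemma nsm_mono: "g \<le> h \<Longrightarrow> nsm n g \<le> nsm n (h::'b::ordered_ab_group_add)"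
  by (induction n) (simp_all add: add_mono)

lemma nsm_strict_mono: "0 < n \<Longrightarrow> g < h \<Longrightarrow> nsm n g < nsm n (h::'b::ordered_ab_group_add)"
proof (induction n)
  case (Suc n)
  then show ?case
    by (cases "n = 0") (simp_all add: add_strict_mono)
qed simp

lemma nsm_increasing: "a \<le> b \<Longrightarrow> 0 \<le> g \<Longrightarrow> nsm a g \<le> nsm b (g::'b::ordered_ab_group_add)"
proof -
  assume "a \<le> b" "0 \<le> g"
  then obtain c where "b = a + c" by (metis le_add_diff_inverse)
  moreover have "0 \<le> nsm c g" using nsm_mono[OF \<open>0 \<le> g\<close>, of c] by simp
  ultimately show ?thesis by (simp add: nsm_add)
qed

lemma nsm_le_iff: "0 < n \<Longrightarrow> nsm n g \<le> nsm n h \<longleftrightarrow> g \<le> (h::'b::linordered_ab_group_add)"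
  by (meson nsm_mono nsm_strict_mono not_le)

lemma nsm_less_iff: "0 < n \<Longrightarrow> nsm n g < nsm n h \<longleftrightarrow> g < (h::'b::linordered_ab_group_add)"
  by (meson nsm_mono nsm_strict_mono not_le)

context
  assumes divisible: "\<forall>g::'b::linordered_ab_group_add. \<forall>n>0. \<exists>h. nsm n h = g"
begin

lemma nsm_divn: "0 < n \<Longrightarrow> nsm n (divn n x) = (x::'b)"
proof -
  assume n: "0 < n"
  obtain h where h: "nsm n h = x" using divisible n by blast
  have "h' = h" if "nsm n h' = x" for h'
    using nsm_le_iff[OF n, of h h'] nsm_le_iff[OF n, of h' h] h that by simp
  then have "divn n x = h" unfolding divn_def using h by (rule_tac the_equality)
  with h show ?thesis by simp
qed

lemma divn_le_iff: "0 < n \<Longrightarrow> divn n x \<le> e \<longleftrightarrow> x \<le> nsm n (e::'b)"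
  using nsm_le_iff[of n "divn n x" e] nsm_divn[of n x] by simp

lemma divn_less_iff: "0 < n \<Longrightarrow> divn n x < e \<longleftrightarrow> x < nsm n (e::'b)"
  using nsm_less_iff[of n "divn n x" e] nsm_divn[of n x] by simp

end

section \<open>Hasse--Schmidt derivatives\<close>

lemma map_poly_const_add:
  "map_poly (\<lambda>c. [:c:]) (f + g) = map_poly (\<lambda>c. [:c:]) f + map_poly (\<lambda>c. [:c::'a::field:]) g"
  by (rule poly_eqI) (simp add: coeff_map_poly)

lemma map_poly_const_mult:
  "map_poly (\<lambda>c. [:c:]) (f * g) = map_poly (\<lambda>c. [:c:]) f * map_poly (\<lambda>c. [:c::'a::field:]) g"
proof (induction f rule: pCons_induct)
  case (pCons a p)
  have "map_poly (\<lambda>c. [:c:]) (smult a g) = smult [:a:] (map_poly (\<lambda>c. [:c:]) g)"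
    by (rule poly_eqI) (simp add: coeff_map_poly)
  with pCons show ?case
    by (simp add: map_poly_const_add map_poly_pCons)
qed simp

lemma hasse_add: "hasse s (f + g) = hasse s f + hasse s g"
  by (simp add: hasse_def map_poly_const_add pcompose_add)

lemma hasse_mult: "hasse s (f * g) = (\<Sum>i\<le>s. hasse i f * hasse (s - i) g)"
  by (simp add: hasse_def map_poly_const_mult pcompose_mult coeff_mult)

lemma hasse_zero [simp]: "hasse s 0 = 0"
  by (simp add: hasse_def)

lemma hasse_eq_0: "degree f < s \<Longrightarrow> hasse s f = 0"
proof -
  assume "degree f < s"
  moreover have "degree (pcompose (map_poly (\<lambda>c. [:c:]) f) [:[:0, 1:], 1:]) \<le> degree f"
    using degree_pcompose_le[of "map_poly (\<lambda>c. [:c:]) f" "[:[:0, 1:], 1:]"]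
    by (simp add: degree_map_poly)
  ultimately show ?thesis by (simp add: hasse_def coeff_eq_0)
qed

lemma hasse_0 [simp]: "hasse 0 f = f"
proof (induction f rule: pCons_induct)
  case (pCons a p)
  then have "hasse 0 (pCons a p) = [:a:] + [:0, 1:] * p"
    by (simp add: hasse_def map_poly_pCons pcompose_pCons coeff_mult)
  also have "\<dots> = pCons a p"
    by (simp add: poly_eq_iff coeff_pCons split: nat.split)
  finally show ?case .
qed (simp add: hasse_def)

section \<open>Valuations on polynomials\<close>

lemma Fin_add_less_le: "Fin c < x \<Longrightarrow> Fin d \<le> y \<Longrightarrow> Fin (c + d) < x + (y::'b::linordered_ab_group_add extended)"
  by (cases x; cases y) (simp_all add: add_less_le_mono)

lemma Fin_add_le_less: "Fin c \<le> x \<Longrightarrow> Fin d < y \<Longrightarrow> Fin (c + d) < x + (y::'b::linordered_ab_group_add extended)"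
  by (cases x; cases y) (simp_all add: add_le_less_mono)

lemma add_Fin_less_cancel: "x + Fin c < y + Fin c \<longleftrightarrow> x < (y::'b::linordered_ab_group_add extended)"
  by (cases x; cases y) simp_all

locale poly_valuation =
  fixes \<nu> :: "'a::field poly \<Rightarrow> 'b::linordered_ab_group_add extended"
  assumes nu_0: "\<nu> 0 = Pinf" and nu_1: "\<nu> 1 = Fin 0" and nu_not_Minf: "\<nu> f \<noteq> Minf"
    and nu_mult: "\<nu> (f * g) = \<nu> f + \<nu> g" and nu_add: "min (\<nu> f) (\<nu> g) \<le> \<nu> (f + g)"
begin

lemma nu_minus [simp]: "\<nu> (- f) = \<nu> f"
proof -
  have "\<nu> (- 1) = Fin 0"
    using nu_mult[of "- 1" "- 1"] nu_1 nu_not_Minf[of "- 1"] by (cases "\<nu> (- 1)") simp_all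
  then show ?thesis using nu_mult[of "- 1" f] nu_not_Minf[of f] by (cases "\<nu> f") simp_all
qed

lemma nu_add_eq: "\<nu> f < \<nu> g \<Longrightarrow> \<nu> (f + g) = \<nu> f"
  using nu_add[of f g] nu_add[of "f + g" "- g"] by (simp add: min_def split: if_splits)

lemma nu_greater_add: "X < \<nu> f \<Longrightarrow> X < \<nu> g \<Longrightarrow> X < \<nu> (f + g)"
  using less_le_trans[OF _ nu_add, of X f g] by simp

lemma nu_greater_diff_trans:
  "X < \<nu> ((a - b) * p) \<Longrightarrow> X < \<nu> ((b - c) * p) \<Longrightarrow> X < \<nu> ((a - c) * p)"
  using nu_greater_add[of X "(a - b) * p" "(b - c) * p"] by (simp add: algebra_simps)

lemma nu_diff_commute: "\<nu> (g - f) = \<nu> (f - g)"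
  using nu_minus[of "f - g"] by simp

lemma nu_eq_of_less_diff: "\<nu> f < \<nu> (f - g) \<Longrightarrow> \<nu> f = \<nu> g"
  using nu_add_eq[of f "g - f"] by (simp add: nu_diff_commute)

lemma nu_sum_ge: "finite I \<Longrightarrow> (\<And>i. i \<in> I \<Longrightarrow> X \<le> \<nu> (F i)) \<Longrightarrow> X \<le> \<nu> (\<Sum>i\<in>I. F i)"
proof (induction I rule: finite_induct)
  case (insert x I)
  then show ?case using order_trans[OF _ nu_add, of X "F x" "\<Sum>i\<in>I. F i"] by simp
qed (simp add: nu_0)

lemma nu_sum_greater:
  "finite I \<Longrightarrow> X \<noteq> Pinf \<Longrightarrow> (\<And>i. i \<in> I \<Longrightarrow> X < \<nu> (F i)) \<Longrightarrow> X < \<nu> (\<Sum>i\<in>I. F i)"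
proof (induction I rule: finite_induct)
  case (insert x I)
  then show ?case using nu_greater_add by simp
qed (cases X; simp add: nu_0)

lemma nu_power: "\<nu> f = Fin c \<Longrightarrow> \<nu> (f ^ j) = Fin (nsm j c)"
  by (induction j) (simp_all add: nu_1 nu_mult)

end

section \<open>Expansions in powers of a polynomial\<close>

lemma qcoeff_0: "qcoeff P f 0 = f mod P"
  by (simp add: qcoeff_def)

lemma qcoeff_Suc: "qcoeff P f (Suc i) = qcoeff P (f div P) i"
  by (simp add: qcoeff_def poly_div_mult_right)

lemma qcoeff_add: "qcoeff P (f + g) i = qcoeff P f i + qcoeff P g i"
  by (simp add: qcoeff_def poly_div_add_left poly_mod_add_left)

lemma qcoeff_zero [simp]: "qcoeff P 0 i = 0"
  by (simp add: qcoeff_def)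

lemma qcoeff_sum: "qcoeff P (\<Sum>t\<in>T. F t) i = (\<Sum>t\<in>T. qcoeff P (F t) i)"
  by (induction T rule: infinite_finite_induct) (simp_all add: qcoeff_add)

lemma qexpansion_partial: "f = (\<Sum>i<N. qcoeff P f i * P ^ i) + P ^ N * (f div P ^ N)"
proof (induction N)
  case (Suc N)
  have "f div P ^ Suc N = (f div P ^ N) div P"
    by (simp only: poly_div_mult_right power_Suc2)
  then have "f div P ^ N = qcoeff P f N + P * (f div P ^ Suc N)"
    by (simp add: qcoeff_def)
  then have "P ^ N * (f div P ^ N) = qcoeff P f N * P ^ N + P ^ Suc N * (f div P ^ Suc N)"
    by (simp add: algebra_simps)
  with Suc.IH show ?case by (simp add: add.assoc)
qed simp

lemma degree_div_bound:
  fixes F P :: "'a::field poly"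
  assumes "P \<noteq> 0" and "F div P \<noteq> 0"
  shows "degree (F div P) + degree P \<le> degree F"
proof (cases "F mod P = 0")
  case True
  then show ?thesis using assms by (metis degree_mult_eq div_mult_mod_eq add_0_right order.refl)
next
  case False
  then have "degree (F mod P) < degree (F div P * P)"
    using degree_mod_less'[OF assms(1) False] assms by (simp add: degree_mult_eq)
  then have "degree F = degree (F div P * P)"
    by (metis degree_add_eq_left div_mult_mod_eq)
  then show ?thesis using assms by (simp add: degree_mult_eq)
qed

definition qsupp :: "'a::field poly \<Rightarrow> 'a poly \<Rightarrow> nat set" where
  "qsupp P f = {j. j \<le> degree f \<and> qcoeff P f j \<noteq> 0}"

lemma finite_qsupp [simp]: "finite (qsupp P f)"
  by (simp add: qsupp_def)

context
  fixes P :: "'a::field poly"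
  assumes degree_P: "0 < degree P"
begin

lemma degree_qcoeff_less: "degree (qcoeff P f i) < degree P"
proof (cases "qcoeff P f i = 0")
  case False
  moreover have "P \<noteq> 0" using degree_P by auto
  ultimately show ?thesis using degree_mod_less' by (simp add: qcoeff_def)
qed (use degree_P in simp)

lemma degree_P_power: "i \<le> degree (P ^ i)"
proof -
  have "P \<noteq> 0" using degree_P by auto
  then show ?thesis using degree_P by (simp add: degree_power_eq)
qed

lemma qcoeff_eq_0: "degree f < i \<Longrightarrow> qcoeff P f i = 0"
proof -
  assume "degree f < i"
  also have "i \<le> degree (P ^ i)" by (rule degree_P_power)
  finally show ?thesis by (simp add: qcoeff_def div_poly_less)
qed

lemma qexpansion: "f = (\<Sum>i\<le>degree f. qcoeff P f i * P ^ i)"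
proof -
  have "degree f < degree (P ^ Suc (degree f))"
    using degree_P_power[of "Suc (degree f)"] by simp
  then show ?thesis
    using qexpansion_partial[where f = f and P = P and N = "Suc (degree f)"] by (simp add: div_poly_less lessThan_Suc_atMost)
qed

lemma qcoeff_eq_0_of_notin_qsupp: "j \<notin> qsupp P f \<Longrightarrow> qcoeff P f j = 0"
  using qcoeff_eq_0[of f j] by (auto simp: qsupp_def not_le)

lemma qexpansion_qsupp: "f = (\<Sum>j\<in>qsupp P f. qcoeff P f j * P ^ j)"
proof -
  have "f = (\<Sum>j\<le>degree f. qcoeff P f j * P ^ j)" by (rule qexpansion)
  also have "\<dots> = (\<Sum>j\<in>qsupp P f. qcoeff P f j * P ^ j)"
    by (rule sum.mono_neutral_right) (auto simp: qsupp_def)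
  finally show ?thesis .
qed

lemma qsupp_nonempty: "f \<noteq> 0 \<Longrightarrow> qsupp P f \<noteq> {}"
  using qexpansion_qsupp[of f] by auto

lemma qcoeff_qexpansion:
  assumes "\<And>k. degree (c k) < degree P"
  shows "qcoeff P (\<Sum>k\<le>N. c k * P ^ k) n = (if n \<le> N then c n else 0)"
  using assms
proof (induction n arbitrary: c N)
  case n: 0
  show ?case
  proof (cases N)
    case (Suc N')
    have "(\<Sum>k\<le>N. c k * P ^ k) = c 0 + P * (\<Sum>k\<le>N'. c (Suc k) * P ^ k)"
      unfolding Suc by (subst sum.atMost_Suc_shift) (simp add: sum_distrib_left mult_ac)
    then show ?thesis using n.prems by (simp add: qcoeff_0 mod_poly_less)
  qed (use n.prems in \<open>simp add: qcoeff_0 mod_poly_less\<close>)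
next
  case n: (Suc n)
  have c0: "c 0 div P = 0" using n.prems by (simp add: div_poly_less)
  show ?case
  proof (cases N)
    case (Suc N')
    have "(\<Sum>k\<le>N. c k * P ^ k) = c 0 + P * (\<Sum>k\<le>N'. c (Suc k) * P ^ k)"
      unfolding Suc by (subst sum.atMost_Suc_shift) (simp add: sum_distrib_left mult_ac)
    then have "(\<Sum>k\<le>N. c k * P ^ k) div P = (\<Sum>k\<le>N'. c (Suc k) * P ^ k)"
      using degree_P c0 by (auto simp: poly_div_add_left)
    then show ?thesis using n.IH[of "\<lambda>k. c (Suc k)" N'] n.prems Suc by (simp add: qcoeff_Suc)
  qed (simp add: qcoeff_Suc c0)
qed

lemma qcoeff_small: "degree a < degree P \<Longrightarrow> qcoeff P a n = (if n = 0 then a else 0)"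
  using qcoeff_qexpansion[of "\<lambda>k. a" 0 n] by simp

lemma qcoeff_mult_power: "qcoeff P (F * P ^ j) i = (if j \<le> i then qcoeff P F (i - j) else 0)"
proof (cases "j \<le> i")
  case True
  have "F * P ^ j div P ^ i = (P ^ j * F) div (P ^ j * P ^ (i - j))"
    using True by (simp add: mult.commute power_add[symmetric])
  also have "\<dots> = F div P ^ (i - j)"
    using degree_P by (intro div_mult_mult1) auto
  finally show ?thesis using True by (simp add: qcoeff_def)
next
  case False
  then have "F * P ^ j = P ^ i * (F * P ^ (j - i - 1) * P)"
    by (simp add: mult_ac flip: power_add power_Suc)
  then have "F * P ^ j div P ^ i = F * P ^ (j - i - 1) * P"
    using degree_P by (auto intro: nonzero_mult_div_cancel_left)
  then show ?thesis using False by (simp add: qcoeff_def)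
qed

lemma qcoeff_mult_small:
  assumes b: "degree b < degree P"
  shows "qcoeff P (f * b) i
    = (qcoeff P f i * b) mod P + (if i = 0 then 0 else (qcoeff P f (i - 1) * b) div P)"
proof -
  define a where "a = qcoeff P f"
  define N where "N = degree f"
  define r where "r k = (a k * b) mod P" for k
  define q where "q k = (a k * b) div P" for k
  define c where "c k = r k + (if k = 0 then 0 else q (k - 1))" for k
  have P0: "P \<noteq> 0" using degree_P by auto
  have "degree (r k) < degree P" for k
    using degree_mod_less'[OF P0, of "a k * b"] degree_P by (cases "r k = 0") (auto simp: r_def)
  moreover have "degree (q k) < degree P" for k
  proof (cases "q k = 0")
    case False
    have "degree (a k * b) < 2 * degree P - 1"
      using degree_qcoeff_less[of f k] b degree_mult_le[of "a k" b] by (simp add: a_def)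
    then show ?thesis using degree_div_bound[OF P0 False[unfolded q_def]] by (simp add: q_def)
  qed (use degree_P in simp)
  ultimately have dc: "degree (c k) < degree P" for k
    by (simp add: c_def degree_add_less)
  have aN: "a (Suc N) = 0" unfolding a_def N_def by (rule qcoeff_eq_0) simp
  have "(\<Sum>k\<le>Suc N. c k * P ^ k)
      = (\<Sum>k\<le>Suc N. r k * P ^ k) + (\<Sum>k\<le>Suc N. (if k = 0 then 0 else q (k - 1)) * P ^ k)"
    unfolding c_def by (simp add: distrib_right sum.distrib)
  also have "(\<Sum>k\<le>Suc N. r k * P ^ k) = (\<Sum>k\<le>N. r k * P ^ k)"
    using aN by (simp add: r_def)
  also have "(\<Sum>k\<le>Suc N. (if k = 0 then 0 else q (k - 1)) * P ^ k) = (\<Sum>k\<le>N. q k * P ^ Suc k)"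
    by (subst sum.atMost_Suc_shift) simp
  also have "(\<Sum>k\<le>N. r k * P ^ k) + (\<Sum>k\<le>N. q k * P ^ Suc k) = (\<Sum>k\<le>N. (r k + q k * P) * P ^ k)"
    unfolding sum.distrib[symmetric] by (rule sum.cong) (simp_all add: algebra_simps)
  also have "\<dots> = (\<Sum>k\<le>N. a k * P ^ k) * b"
    unfolding sum_distrib_right by (rule sum.cong) (simp_all add: r_def q_def mult_ac)
  also have "(\<Sum>k\<le>N. a k * P ^ k) = f" unfolding a_def N_def by (rule qexpansion[symmetric])
  finally have "qcoeff P (f * b) i = (if i \<le> Suc N then c i else 0)"
    using qcoeff_qexpansion[of c "Suc N" i, OF dc] by simp
  also have "\<dots> = c i"
    using qcoeff_eq_0[of f i] qcoeff_eq_0[of f "i - 1"]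
    by (auto simp: c_def r_def q_def a_def N_def)
  finally show ?thesis by (simp add: c_def r_def q_def a_def)
qed

end

lemma degQ_le:
  assumes "J \<le> degree f"
    and "\<And>i. J < i \<Longrightarrow> \<nu> (qcoeff P f J * P ^ J) < \<nu> (qcoeff P f i * P ^ i)"
  shows "degQ \<nu> P f \<le> J"
proof -
  let ?t = "\<lambda>i. \<nu> (qcoeff P f i * P ^ i)"
  have nuQ_le: "nuQ \<nu> P f \<le> ?t J"
    unfolding nuQ_def using assms(1) by (intro Min_le) auto
  have top: "i \<le> J" if "i \<in> SQ \<nu> P f" for i
  proof (rule ccontr)
    assume "\<not> i \<le> J"
    then have "?t J < ?t i" using assms(2) by simp
    moreover have "?t i = nuQ \<nu> P f" using that by (simp add: SQ_def)
    ultimately show False using nuQ_le by simp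
  qed
  have "nuQ \<nu> P f \<in> ?t ` {..degree f}"
    unfolding nuQ_def by (intro Min_in) auto
  then have "SQ \<nu> P f \<noteq> {}" by (auto simp: SQ_def)
  moreover have "SQ \<nu> P f \<subseteq> {..J}" using top by auto
  then have "finite (SQ \<nu> P f)" by (rule finite_subset) simp
  ultimately show ?thesis using top by (simp add: degQ_def)
qed

section \<open>Products modulo a key polynomial\<close>

text \<open>\<open>level_below \<nu> e g a\<close> says \<open>\<nu> g = a\<close> and \<open>\<epsilon>(g) < e\<close>, with the division in
  the definition of the level multiplied out.\<close>

definition level_below ::
    "('a::field poly \<Rightarrow> 'b::linordered_ab_group_add extended) \<Rightarrow> 'b \<Rightarrow> 'a poly \<Rightarrow> 'b \<Rightarrow> bool" where
  "level_below \<nu> e g a \<longleftrightarrow> \<nu> g = Fin a \<and> (\<forall>s\<ge>1. Fin (a - nsm s e) < \<nu> (hasse s g))"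

lemma level_below_nu: "level_below \<nu> e g a \<Longrightarrow> \<nu> g = Fin a"
  by (simp add: level_below_def)

lemma level_below_hasse: "level_below \<nu> e g a \<Longrightarrow> 0 < s \<Longrightarrow> Fin (a - nsm s e) < \<nu> (hasse s g)"
  by (simp add: level_below_def)

context poly_valuation begin

lemma level_below_mult:
  assumes g: "level_below \<nu> e g a" and h: "level_below \<nu> e h b"
  shows "level_below \<nu> e (g * h) (a + b)"
  unfolding level_below_def
proof (intro conjI allI impI)
  show "\<nu> (g * h) = Fin (a + b)" using g h by (simp add: level_below_def nu_mult)
next
  fix s :: nat assume s: "1 \<le> s"
  have "Fin (a + b - nsm s e) < \<nu> (hasse i g * hasse (s - i) h)" if i: "i \<le> s" for i
  proof -
    consider "i = 0" | "i = s" | "0 < i" "i < s" using i by linarith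
    then show ?thesis
    proof cases
      case 1
      then have "Fin (a + (b - nsm s e)) < \<nu> (hasse i g) + \<nu> (hasse (s - i) h)"
        using g h s by (intro Fin_add_le_less) (simp_all add: level_below_def)
      then show ?thesis by (simp add: nu_mult algebra_simps)
    next
      case 2
      then have "Fin ((a - nsm s e) + b) < \<nu> (hasse i g) + \<nu> (hasse (s - i) h)"
        using g h s by (intro Fin_add_less_le) (simp_all add: level_below_def)
      then show ?thesis by (simp add: nu_mult algebra_simps)
    next
      case 3
      then have "Fin ((a - nsm i e) + (b - nsm (s - i) e)) < \<nu> (hasse i g) + \<nu> (hasse (s - i) h)"
        using g h by (intro Fin_add_less_le less_imp_le) (simp_all add: level_below_def)
      moreover have "nsm i e + nsm (s - i) e = nsm s e" using i by (simp flip: nsm_add)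
      ultimately show ?thesis by (simp add: nu_mult algebra_simps)
    qed
  qed
  then have "Fin (a + b - nsm s e) < \<nu> (\<Sum>i\<le>s. hasse i g * hasse (s - i) h)"
    by (intro nu_sum_greater) simp_all
  then show "Fin (a + b - nsm s e) < \<nu> (hasse s (g * h))" by (simp add: hasse_mult)
qed

end

text \<open>The parameter \<open>e\<close> stands for the level \<open>\<epsilon>(Q)\<close>.\<close>

locale key_polynomial = poly_valuation \<nu> for \<nu> :: "'a::field poly \<Rightarrow> 'b::linordered_ab_group_add extended" +
  fixes Q :: "'a poly" and m :: nat and \<gamma> e :: 'b
  assumes degree_Q: "degree Q = m" and m_pos: "0 < m" and nu_Q: "\<nu> Q = Fin \<gamma>"
    and small_level_below: "\<And>g. g \<noteq> 0 \<Longrightarrow> degree g < m \<Longrightarrow> \<exists>a. level_below \<nu> e g a"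
    and nu_hasse_Q_ge: "\<And>s. Fin (\<gamma> - nsm s e) \<le> \<nu> (hasse s Q)"
    and nu_hasse_Q_eq: "\<exists>b\<ge>1. \<nu> (hasse b Q) = Fin (\<gamma> - nsm b e)"
begin

lemma Q_nonzero: "Q \<noteq> 0"
  using degree_Q m_pos by auto

lemma degree_Q_pos: "0 < degree Q"
  using degree_Q m_pos by simp

lemma small_nu_Fin: "g \<noteq> 0 \<Longrightarrow> degree g < m \<Longrightarrow> \<exists>a. \<nu> g = Fin a"
  using small_level_below by (auto simp: level_below_def)

lemma nu_mult_Q_power: "\<nu> (x * Q ^ j) = \<nu> x + Fin (nsm j \<gamma>)"
  by (simp add: nu_mult nu_power[OF nu_Q])

lemma nu_hasse_mult_Q:
  assumes q: "level_below \<nu> e q \<alpha>" and b: "1 \<le> b" and hb: "\<nu> (hasse b Q) = Fin (\<gamma> - nsm b e)"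
  shows "\<nu> (hasse b (q * Q)) = Fin (\<alpha> + \<gamma> - nsm b e)"
proof -
  obtain b' where b': "b = Suc b'" using b by (cases b) auto
  have split: "hasse b (q * Q) = q * hasse b Q + (\<Sum>i\<le>b'. hasse (Suc i) q * hasse (b - Suc i) Q)"
    using sum.atMost_Suc_shift[of "\<lambda>i. hasse i q * hasse (b - i) Q" b'] by (simp add: hasse_mult b')
  have first: "\<nu> (q * hasse b Q) = Fin (\<alpha> + \<gamma> - nsm b e)"
    using level_below_nu[OF q] hb by (simp add: nu_mult algebra_simps)
  have "Fin (\<alpha> + \<gamma> - nsm b e) < \<nu> (hasse (Suc i) q * hasse (b - Suc i) Q)" if "i \<le> b'" for i
  proof -
    have "Fin (\<alpha> - nsm (Suc i) e) < \<nu> (hasse (Suc i) q)"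
      by (rule level_below_hasse[OF q]) simp
    then have "Fin ((\<alpha> - nsm (Suc i) e) + (\<gamma> - nsm (b - Suc i) e)) < \<nu> (hasse (Suc i) q) + \<nu> (hasse (b - Suc i) Q)"
      using nu_hasse_Q_ge by (rule Fin_add_less_le)
    moreover have "nsm (Suc i) e + nsm (b - Suc i) e = nsm b e" using that b' by (simp flip: nsm_add)
    ultimately show ?thesis by (simp add: nu_mult algebra_simps)
  qed
  then have "Fin (\<alpha> + \<gamma> - nsm b e) < \<nu> (\<Sum>i\<le>b'. hasse (Suc i) q * hasse (b - Suc i) Q)"
    by (intro nu_sum_greater) simp_all
  then show ?thesis unfolding split using nu_add_eq first by simp
qed

lemma nu_hasse_small_greater:
  assumes "degree r < m" and "Fin c \<le> \<nu> r" and "0 < s"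
  shows "Fin (c - nsm s e) < \<nu> (hasse s r)"
proof (cases "r = 0")
  case False
  then obtain \<rho> where r: "level_below \<nu> e r \<rho>" using small_level_below assms(1) by blast
  then have "Fin (c - nsm s e) \<le> Fin (\<rho> - nsm s e)"
    using assms(2) level_below_nu[OF r] by simp
  also have "\<dots> < \<nu> (hasse s r)" using level_below_hasse[OF r assms(3)] .
  finally show ?thesis .
qed (simp add: nu_0)

text \<open>If the remainder \<open>r\<close> of \<open>F = q Q + r\<close> did not carry the value of \<open>F\<close>, then at the Hasse
  derivative where \<open>Q\<close> attains its level, \<open>q Q\<close> would dominate and give \<open>F\<close> level \<open>e\<close>.\<close>

lemma nu_mod_Q:
  assumes F: "level_below \<nu> e F a" and deg_F: "degree F < 2 * m"
  shows "\<nu> (F mod Q) = \<nu> F \<and> \<nu> F < \<nu> (F div Q * Q)"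
proof (cases "F div Q = 0")
  case True
  then have "F mod Q = F" using div_mult_mod_eq[of F Q] by simp
  with True level_below_nu[OF F] show ?thesis by (simp add: nu_0)
next
  case False
  define q r where "q = F div Q" and "r = F mod Q"
  have F_eq: "F = q * Q + r" by (simp add: q_def r_def)
  have "degree q < m"
    using degree_div_bound[OF Q_nonzero False] deg_F degree_Q by (simp add: q_def)
  then obtain \<alpha> where q: "level_below \<nu> e q \<alpha>" using small_level_below False q_def by blast
  have nu_qQ: "\<nu> (q * Q) = Fin (\<alpha> + \<gamma>)" using level_below_nu[OF q] nu_Q by (simp add: nu_mult)
  obtain b where b: "1 \<le> b" and hb: "\<nu> (hasse b Q) = Fin (\<gamma> - nsm b e)"
    using nu_hasse_Q_eq by blast
  have r_less: "\<nu> r < Fin (\<alpha> + \<gamma>)"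
  proof (rule ccontr)
    assume "\<not> \<nu> r < Fin (\<alpha> + \<gamma>)"
    then have r_ge: "Fin (\<alpha> + \<gamma>) \<le> \<nu> r" by simp
    have "degree r < m"
      using degree_mod_less[OF Q_nonzero, of F] degree_Q m_pos by (auto simp: r_def)
    then have "Fin (\<alpha> + \<gamma> - nsm b e) < \<nu> (hasse b r)"
      using r_ge b by (intro nu_hasse_small_greater) simp_all
    then have "\<nu> (hasse b F) = Fin (\<alpha> + \<gamma> - nsm b e)"
      using nu_add_eq nu_hasse_mult_Q[OF q b hb] F_eq by (simp add: hasse_add)
    moreover have "Fin (a - nsm b e) < \<nu> (hasse b F)" using level_below_hasse[OF F] b by simp
    moreover have "Fin (\<alpha> + \<gamma>) \<le> \<nu> F"
      using nu_add[of "q * Q" r] F_eq nu_qQ r_ge by (simp add: min_def split: if_splits)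
    ultimately show False using level_below_nu[OF F] by simp
  qed
  then have "\<nu> F = \<nu> r" using nu_add_eq[of r "q * Q"] nu_qQ F_eq by (simp add: add.commute)
  with r_less nu_qQ show ?thesis by (simp add: q_def r_def)
qed

lemma nu_mult_mod_Q:
  assumes "g \<noteq> 0" "degree g < m" "h \<noteq> 0" "degree h < m"
  shows "\<nu> (g * h mod Q) = \<nu> (g * h) \<and> \<nu> (g * h) < \<nu> (g * h div Q * Q)"
proof -
  obtain a b where g: "level_below \<nu> e g a" and h: "level_below \<nu> e h b"
    using small_level_below assms by meson
  have "degree (g * h) < 2 * m"
    using degree_mult_le[of g h] assms by linarith
  then show ?thesis by (rule nu_mod_Q[OF level_below_mult[OF g h]])
qed

end

section \<open>Values of the terms of a \<open>Q\<close>-expansion\<close>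

context key_polynomial begin

definition qterm :: "'a poly \<Rightarrow> nat \<Rightarrow> 'b extended" where
  "qterm f i = \<nu> (qcoeff Q f i * Q ^ i)"

text \<open>\<open>qlead f M J\<close> says that \<open>\<nu>\<^sub>Q(f) = M\<close> and \<open>deg\<^sub>Q f = J\<close>; see \<open>qlead_nuQ_degQ\<close>.\<close>

definition qterms_ge :: "'a poly \<Rightarrow> 'b \<Rightarrow> nat \<Rightarrow> bool" where
  "qterms_ge f M J \<longleftrightarrow> (\<forall>i. Fin M \<le> qterm f i \<and> (J < i \<longrightarrow> Fin M < qterm f i))"

definition qlead :: "'a poly \<Rightarrow> 'b \<Rightarrow> nat \<Rightarrow> bool" where
  "qlead f M J \<longleftrightarrow> qterms_ge f M J \<and> qterm f J = Fin M"

lemma qterm_eq: "qterm f i = \<nu> (qcoeff Q f i) + Fin (nsm i \<gamma>)"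
  by (simp add: qterm_def nu_mult_Q_power)

lemma qterms_geI:
  "(\<And>i. Fin M \<le> qterm f i) \<Longrightarrow> (\<And>i. J < i \<Longrightarrow> Fin M < qterm f i) \<Longrightarrow> qterms_ge f M J"
  by (simp add: qterms_ge_def)

lemma qterms_ge_le: "qterms_ge f M J \<Longrightarrow> Fin M \<le> qterm f i"
  by (simp add: qterms_ge_def)

lemma qterms_ge_less: "qterms_ge f M J \<Longrightarrow> J < i \<Longrightarrow> Fin M < qterm f i"
  by (simp add: qterms_ge_def)

lemma qterms_ge_mono: "qterms_ge f M J \<Longrightarrow> M' \<le> M \<Longrightarrow> J \<le> J' \<Longrightarrow> qterms_ge f M' J'"
proof (rule qterms_geI)
  fix i
  assume f: "qterms_ge f M J" and "M' \<le> M" "J \<le> J'"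
  then have M: "Fin M' \<le> Fin M" by simp
  show "Fin M' \<le> qterm f i" using M qterms_ge_le[OF f] by (rule order_trans)
  show "Fin M' < qterm f i" if "J' < i"
  proof -
    have "Fin M < qterm f i" using qterms_ge_less[OF f] that \<open>J \<le> J'\<close> by simp
    with M show ?thesis by (rule le_less_trans)
  qed
qed

lemma qterms_ge_strict: "qterms_ge f M J \<Longrightarrow> M' < M \<Longrightarrow> Fin M' < qterm f i"
proof -
  assume "qterms_ge f M J" "M' < M"
  then have "Fin M' < Fin M" "Fin M \<le> qterm f i" by (simp_all add: qterms_ge_le)
  then show ?thesis by (rule less_le_trans)
qed

lemma qterms_ge_strict_mono: "qterms_ge f M J \<Longrightarrow> M' < M \<Longrightarrow> qterms_ge f M' J'"
  by (rule qterms_geI) (simp_all add: qterms_ge_strict less_imp_le)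

lemma qterm_mult_Q_power:
  "qterm (F * Q ^ j) i = (if j \<le> i then qterm F (i - j) + Fin (nsm j \<gamma>) else Pinf)"
proof (cases "j \<le> i")
  case True
  then have "nsm i \<gamma> = nsm (i - j) \<gamma> + nsm j \<gamma>" by (simp flip: nsm_add)
  with True show ?thesis
    by (simp add: qterm_eq qcoeff_mult_power[OF degree_Q_pos] add.assoc)
qed (simp add: qterm_def qcoeff_mult_power[OF degree_Q_pos] nu_0)

lemma qlead_mult_Q_power: "qlead F M J \<Longrightarrow> qlead (F * Q ^ j) (M + nsm j \<gamma>) (J + j)"
  unfolding qlead_def
proof (intro conjI qterms_geI)
  fix i
  assume F: "qterms_ge F M J \<and> qterm F J = Fin M"
  show "Fin (M + nsm j \<gamma>) \<le> qterm (F * Q ^ j) i"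
    using qterms_ge_le[of F M J "i - j"] F add_right_mono[of "Fin M" _ "Fin (nsm j \<gamma>)"]
    by (simp add: qterm_mult_Q_power)
  show "Fin (M + nsm j \<gamma>) < qterm (F * Q ^ j) i" if "J + j < i"
    using qterms_ge_less[of F M J "i - j"] F that Fin_add_less_le[of M _ "nsm j \<gamma>"]
    by (simp add: qterm_mult_Q_power)
  show "qterm (F * Q ^ j) (J + j) = Fin (M + nsm j \<gamma>)"
    using F by (simp add: qterm_mult_Q_power)
qed

lemma qlead_nonzero: "qlead f M J \<Longrightarrow> qcoeff Q f J \<noteq> 0"
  by (auto simp: qlead_def qterm_def nu_0)

lemma qlead_le_degree: "qlead f M J \<Longrightarrow> J \<le> degree f"
  using qlead_nonzero qcoeff_eq_0[OF degree_Q_pos] by (meson not_le)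

lemma qlead_nuQ_degQ:
  assumes lead: "qlead f M J"
  shows "nuQ \<nu> Q f = Fin M \<and> degQ \<nu> Q f = J"
proof -
  have J: "J \<le> degree f" by (rule qlead_le_degree[OF lead])
  have nuQ: "nuQ \<nu> Q f = Fin M"
    unfolding nuQ_def qterm_def[symmetric]
  proof (rule Min_eqI)
    show "Fin M \<in> qterm f ` {..degree f}"
      using lead J by (intro rev_image_eqI[of J]) (simp_all add: qlead_def)
  qed (use lead qterms_ge_le in \<open>auto simp: qlead_def\<close>)
  have top: "i \<le> J" if "qterm f i = Fin M" for i
  proof (rule ccontr)
    assume "\<not> i \<le> J"
    then have "Fin M < qterm f i" using qterms_ge_less[of f M J i] lead by (simp add: qlead_def)
    with that show False by simp
  qed
  have "SQ \<nu> Q f = {i. qterm f i = Fin M}" by (simp add: SQ_def nuQ qterm_def)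
  also have "Max \<dots> = J"
  proof (rule Max_eqI)
    have "{i. qterm f i = Fin M} \<subseteq> {..J}" using top by auto
    then show "finite {i. qterm f i = Fin M}" by (rule finite_subset) simp
  qed (use lead top in \<open>simp_all add: qlead_def\<close>)
  finally show ?thesis by (simp add: degQ_def nuQ)
qed

lemma qlead_small:
  assumes "c \<noteq> 0" "degree c < m" "\<nu> c = Fin \<kappa>"
  shows "qlead c \<kappa> 0"
proof -
  have "qcoeff Q c i = (if i = 0 then c else 0)" for i
    using qcoeff_small[OF degree_Q_pos] assms degree_Q by simp
  then show ?thesis using assms by (simp add: qlead_def qterms_ge_def qterm_def nu_0)
qed

text \<open>Multiplying a \<open>Q\<close>-expansion by \<open>b\<close> of degree below \<open>m\<close> multiplies every coefficient by \<open>b\<close>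
  modulo \<open>Q\<close>, which adds \<open>\<nu> b\<close> to its value by \<open>nu_mult_mod_Q\<close>, and adds carries of strictly
  larger value.\<close>

lemma nu_carry_mult_small:
  assumes b: "b \<noteq> 0" "degree b < m" "\<nu> b = Fin \<beta>" and f: "qterms_ge f M J"
  shows "Fin (M + \<beta>) < \<nu> ((if i = 0 then 0 else (qcoeff Q f (i - 1) * b) div Q) * Q ^ i)"
proof (cases "i = 0 \<or> qcoeff Q f (i - 1) = 0")
  case False
  then obtain k where i: "i = Suc k" and a: "qcoeff Q f k \<noteq> 0" by (cases i) auto
  have deg_a: "degree (qcoeff Q f k) < m"
    using degree_qcoeff_less[OF degree_Q_pos] degree_Q by simp
  then obtain \<alpha> where nu_a: "\<nu> (qcoeff Q f k) = Fin \<alpha>" using small_nu_Fin a by blast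
  have "Fin (\<alpha> + \<beta>) < \<nu> ((qcoeff Q f k * b) div Q * Q)"
    using nu_mult_mod_Q[OF a deg_a b(1,2)] nu_a b(3) by (simp add: nu_mult)
  then have carry: "Fin ((\<alpha> + \<beta>) + nsm k \<gamma>) < \<nu> ((qcoeff Q f k * b) div Q * Q * Q ^ k)"
    unfolding nu_mult_Q_power by (rule Fin_add_less_le) simp
  have "M \<le> \<alpha> + nsm k \<gamma>"
    using qterms_ge_le[OF f, of k] nu_a by (simp add: qterm_eq)
  then have "Fin (M + \<beta>) \<le> Fin ((\<alpha> + \<beta>) + nsm k \<gamma>)" by (simp add: algebra_simps)
  also note carry
  also have "(qcoeff Q f k * b) div Q * Q * Q ^ k
      = (if i = 0 then 0 else (qcoeff Q f (i - 1) * b) div Q) * Q ^ i"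
    using i by (simp add: mult_ac)
  finally show ?thesis .
qed (auto simp: nu_0)

lemma qlead_mult_small:
  assumes b: "b \<noteq> 0" "degree b < m" "\<nu> b = Fin \<beta>" and f: "qlead f M J"
  shows "qlead (f * b) (M + \<beta>) J
    \<and> Fin (M + \<beta>) < \<nu> ((qcoeff Q (f * b) J - (qcoeff Q f J * b) mod Q) * Q ^ J)"
proof -
  have f_ge: "qterms_ge f M J" using f by (simp add: qlead_def)
  define R D where "R i = (qcoeff Q f i * b) mod Q * Q ^ i"
    and "D i = (if i = 0 then 0 else (qcoeff Q f (i - 1) * b) div Q) * Q ^ i" for i
  have qcoeff_fb: "qcoeff Q (f * b) i = (qcoeff Q f i * b) mod Q + (if i = 0 then 0 else (qcoeff Q f (i - 1) * b) div Q)" for i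
    using qcoeff_mult_small[OF degree_Q_pos] b degree_Q by simp
  have qterm_fb: "qterm (f * b) i = \<nu> (R i + D i)" for i
    by (simp add: qterm_def R_def D_def qcoeff_fb distrib_right)
  have D: "Fin (M + \<beta>) < \<nu> (D i)" for i
    unfolding D_def by (rule nu_carry_mult_small[OF b f_ge])
  have R: "\<nu> (R i) = qterm f i + Fin \<beta>" for i
  proof (cases "qcoeff Q f i = 0")
    case False
    have "degree (qcoeff Q f i) < m" using degree_qcoeff_less[OF degree_Q_pos] degree_Q by simp
    then have "\<nu> ((qcoeff Q f i * b) mod Q) = \<nu> (qcoeff Q f i) + \<nu> b"
      using nu_mult_mod_Q[OF False _ b(1,2)] by (simp add: nu_mult)
    then show ?thesis by (simp add: R_def qterm_def nu_mult b(3) ac_simps)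
  qed (simp add: R_def qterm_def nu_0)
  have "qterms_ge (f * b) (M + \<beta>) J"
  proof (rule qterms_geI)
    fix i
    have "Fin (M + \<beta>) \<le> \<nu> (R i)"
      using R add_right_mono[OF qterms_ge_le[OF f_ge, of i], of "Fin \<beta>"] by simp
    then show "Fin (M + \<beta>) \<le> qterm (f * b) i"
      using D[of i] nu_add[of "R i" "D i"] qterm_fb by (simp add: min_def split: if_splits)
    assume "J < i"
    then have "Fin (M + \<beta>) < \<nu> (R i)"
      using R Fin_add_less_le[OF qterms_ge_less[OF f_ge], of i \<beta> "Fin \<beta>"] by simp
    then show "Fin (M + \<beta>) < qterm (f * b) i"
      using D[of i] nu_greater_add qterm_fb by simp
  qed
  moreover have "qterm (f * b) J = Fin (M + \<beta>)"
    using f R[of J] D[of J] nu_add_eq[of "R J" "D J"] qterm_fb by (simp add: qlead_def)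
  moreover have "(qcoeff Q (f * b) J - (qcoeff Q f J * b) mod Q) * Q ^ J = D J"
    by (simp add: qcoeff_fb D_def)
  ultimately show ?thesis using D[of J] by (simp add: qlead_def)
qed

lemma qlead_sum:
  assumes S: "finite S" "j0 \<in> S" and lead: "qlead (F j0) M J"
    and ge: "\<And>j. j \<in> S \<Longrightarrow> qterms_ge (F j) M J"
    and less: "\<And>j. j \<in> S \<Longrightarrow> j \<noteq> j0 \<Longrightarrow> Fin M < qterm (F j) J"
  shows "qlead (\<Sum>j\<in>S. F j) M J
    \<and> Fin M < \<nu> ((qcoeff Q (\<Sum>j\<in>S. F j) J - qcoeff Q (F j0) J) * Q ^ J)"
proof -
  have qterm_sum: "qterm (\<Sum>j\<in>T. F j) i = \<nu> (\<Sum>j\<in>T. qcoeff Q (F j) i * Q ^ i)" for T i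
    by (simp add: qterm_def qcoeff_sum sum_distrib_right)
  have sum_ge: "qterms_ge (\<Sum>j\<in>S. F j) M J"
  proof (rule qterms_geI)
    fix i
    have "Fin M \<le> \<nu> (qcoeff Q (F j) i * Q ^ i)" if "j \<in> S" for j
      using qterms_ge_le[OF ge[OF that]] by (simp add: qterm_def)
    then show "Fin M \<le> qterm (\<Sum>j\<in>S. F j) i"
      unfolding qterm_sum by (rule nu_sum_ge[OF S(1)])
    assume "J < i"
    then have "Fin M < \<nu> (qcoeff Q (F j) i * Q ^ i)" if "j \<in> S" for j
      using qterms_ge_less[OF ge[OF that]] by (simp add: qterm_def)
    then show "Fin M < qterm (\<Sum>j\<in>S. F j) i"
      unfolding qterm_sum by (intro nu_sum_greater[OF S(1)]) simp_all
  qed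
  define X where "X j = qcoeff Q (F j) J * Q ^ J" for j
  have rest: "Fin M < \<nu> (\<Sum>j\<in>S - {j0}. X j)"
    using S less by (intro nu_sum_greater) (auto simp: X_def qterm_def)
  have "qterm (\<Sum>j\<in>S. F j) J = \<nu> (X j0 + (\<Sum>j\<in>S - {j0}. X j))"
    using sum.remove[OF S, of X] by (simp add: qterm_sum X_def)
  also have "\<dots> = Fin M"
    using lead rest nu_add_eq[of "X j0"] by (simp add: X_def qlead_def qterm_def)
  finally have top: "qterm (\<Sum>j\<in>S. F j) J = Fin M" .
  have "(qcoeff Q (\<Sum>j\<in>S. F j) J - qcoeff Q (F j0) J) * Q ^ J = (\<Sum>j\<in>S - {j0}. X j)"
    using sum.remove[OF S, of "\<lambda>j. qcoeff Q (F j) J"]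
    by (simp add: qcoeff_sum X_def sum_distrib_right[symmetric])
  with sum_ge top rest show ?thesis by (simp add: qlead_def)
qed

lemma qlead_sum_min:
  assumes S: "finite S" "j0 \<in> S"
    and lead: "\<And>j. j \<in> S \<Longrightarrow> qlead (F j) (\<mu> j) (d j)"
    and min: "\<And>j. j \<in> S \<Longrightarrow> \<mu> j0 \<le> \<mu> j"
    and top: "\<And>j. j \<in> S \<Longrightarrow> j \<noteq> j0 \<Longrightarrow> \<mu> j = \<mu> j0 \<Longrightarrow> d j < d j0"
  shows "qlead (\<Sum>j\<in>S. F j) (\<mu> j0) (d j0)
    \<and> Fin (\<mu> j0) < \<nu> ((qcoeff Q (\<Sum>j\<in>S. F j) (d j0) - qcoeff Q (F j0) (d j0)) * Q ^ d j0)"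
proof -
  have "qterms_ge (F j) (\<mu> j0) (d j0) \<and> (j \<noteq> j0 \<longrightarrow> Fin (\<mu> j0) < qterm (F j) (d j0))"
    if j: "j \<in> S" for j
  proof -
    have ge: "qterms_ge (F j) (\<mu> j) (d j)" using lead[OF j] by (simp add: qlead_def)
    show ?thesis
    proof (cases "\<mu> j0 < \<mu> j")
      case True
      then show ?thesis using qterms_ge_strict_mono[OF ge] qterms_ge_strict[OF ge] by blast
    next
      case False
      then have eq: "\<mu> j = \<mu> j0" using min[OF j] by simp
      show ?thesis
      proof (cases "j = j0")
        case False
        then have "d j < d j0" using top[OF j] eq by simp
        then show ?thesis using qterms_ge_mono[OF ge] qterms_ge_less[OF ge] eq False by simp
      qed (use ge in simp)
    qed
  qed
  then show ?thesis
    using qlead_sum[where F = F and M = "\<mu> j0" and J = "d j0", OF S lead[OF S(2)]] by blast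
qed

lemma qterm_Fin: "j \<in> qsupp Q g \<Longrightarrow> \<exists>a. qterm g j = Fin a"
proof -
  assume "j \<in> qsupp Q g"
  then have "qcoeff Q g j \<noteq> 0" "degree (qcoeff Q g j) < m"
    using degree_qcoeff_less[OF degree_Q_pos] degree_Q by (simp_all add: qsupp_def)
  then obtain a where "\<nu> (qcoeff Q g j) = Fin a" using small_nu_Fin by blast
  then show ?thesis by (simp add: qterm_eq)
qed

lemma qlead_mult_qterm:
  assumes f: "qlead f M J" and j: "j \<in> qsupp Q g"
  shows "qlead (f * qcoeff Q g j * Q ^ j) (M + fin_val (qterm g j)) (J + j)
    \<and> Fin (M + fin_val (qterm g j))
      < \<nu> ((qcoeff Q (f * qcoeff Q g j * Q ^ j) (J + j) - (qcoeff Q f J * qcoeff Q g j) mod Q) * Q ^ (J + j))"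
proof -
  define b where "b = qcoeff Q g j"
  have b: "b \<noteq> 0" "degree b < m"
    using j degree_qcoeff_less[OF degree_Q_pos] degree_Q by (simp_all add: b_def qsupp_def)
  then obtain \<beta> where nu_b: "\<nu> b = Fin \<beta>" using small_nu_Fin by blast
  have qterm_g: "fin_val (qterm g j) = \<beta> + nsm j \<gamma>"
    using nu_b by (simp add: qterm_eq b_def fin_val_def)
  note fb = qlead_mult_small[OF b nu_b f]
  define X where "X = (qcoeff Q (f * b) J - (qcoeff Q f J * b) mod Q) * Q ^ J"
  have "Fin ((M + \<beta>) + nsm j \<gamma>) < \<nu> (X * Q ^ j)"
    unfolding nu_mult_Q_power using fb by (intro Fin_add_less_le) (simp_all add: X_def)
  moreover have "qcoeff Q (f * b * Q ^ j) (J + j) = qcoeff Q (f * b) J"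
    by (simp add: qcoeff_mult_power[OF degree_Q_pos])
  then have "X * Q ^ j = (qcoeff Q (f * b * Q ^ j) (J + j) - (qcoeff Q f J * b) mod Q) * Q ^ (J + j)"
    by (simp add: X_def power_add mult.assoc)
  ultimately show ?thesis
    using qlead_mult_Q_power[OF conjunct1[OF fb], of j] qterm_g by (simp add: b_def add.assoc)
qed

lemma qlead_mult:
  assumes f: "qlead f M1 J1" and g: "qlead g M2 J2"
  shows "qlead (f * g) (M1 + M2) (J1 + J2)
    \<and> Fin (M1 + M2) < \<nu> ((qcoeff Q (f * g) (J1 + J2) - (qcoeff Q f J1 * qcoeff Q g J2) mod Q) * Q ^ (J1 + J2))"
proof -
  define F \<mu> where "F j = f * qcoeff Q g j * Q ^ j" and "\<mu> j = M1 + fin_val (qterm g j)" for j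
  have J2: "J2 \<in> qsupp Q g"
    using qlead_le_degree[OF g] qlead_nonzero[OF g] by (simp add: qsupp_def)
  have fg: "f * g = (\<Sum>j\<in>qsupp Q g. F j)"
    using arg_cong[OF qexpansion_qsupp[OF degree_Q_pos, of g], of "(*) f"]
    by (simp add: F_def sum_distrib_left mult.assoc)
  have sum: "qlead (f * g) (\<mu> J2) (J1 + J2)
      \<and> Fin (\<mu> J2) < \<nu> ((qcoeff Q (f * g) (J1 + J2) - qcoeff Q (F J2) (J1 + J2)) * Q ^ (J1 + J2))"
    unfolding fg
  proof (rule qlead_sum_min[where d = "\<lambda>j. J1 + j"])
    fix j assume j: "j \<in> qsupp Q g"
    obtain a where a: "qterm g j = Fin a" using qterm_Fin[OF j] by blast
    then show "\<mu> J2 \<le> \<mu> j"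
      using qterms_ge_le[of g M2 J2 j] g by (simp add: \<mu>_def qlead_def fin_val_def)
    assume "j \<noteq> J2" "\<mu> j = \<mu> J2"
    then have "\<not> J2 < j"
      using qterms_ge_less[of g M2 J2 j] g a by (auto simp: qlead_def \<mu>_def fin_val_def)
    with \<open>j \<noteq> J2\<close> show "J1 + j < J1 + J2" by simp
  qed (use J2 qlead_mult_qterm[OF f] in \<open>simp_all add: F_def \<mu>_def\<close>)
  have "Fin (\<mu> J2) < \<nu> ((qcoeff Q (F J2) (J1 + J2) - (qcoeff Q f J1 * qcoeff Q g J2) mod Q) * Q ^ (J1 + J2))"
    using qlead_mult_qterm[OF f J2] by (simp add: F_def \<mu>_def)
  moreover have "\<mu> J2 = M1 + M2" using g by (simp add: \<mu>_def qlead_def fin_val_def)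
  ultimately show ?thesis using sum nu_greater_diff_trans by metis
qed

end

section \<open>Expansions in powers of a nearby key polynomial\<close>

locale key_polynomial_pair = key_polynomial +
  fixes R :: "'a poly" and \<delta> :: 'b
  assumes degree_Q_minus_R: "degree (Q - R) < m" and nu_R: "\<nu> R = Fin \<delta>" and \<gamma>_less_\<delta>: "\<gamma> < \<delta>"
begin

lemma degree_R: "degree R = m"
proof -
  have "degree (R - Q) < degree Q"
    using degree_Q_minus_R degree_Q degree_minus[of "Q - R"] by simp
  then have "degree (Q + (R - Q)) = degree Q" by (rule degree_add_eq_left)
  then show ?thesis using degree_Q by simp
qed

text \<open>The \<open>Q\<close>-expansion of \<open>R\<close> is \<open>(R - Q) + Q\<close>, and \<open>\<nu>(R - Q) = \<nu>(Q)\<close> because \<open>\<nu>(R) > \<nu>(Q)\<close>.\<close>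

lemma qlead_R: "qlead R \<gamma> 1 \<and> qcoeff Q R 1 = 1"
proof -
  define c where "c (k::nat) = (if k = 0 then R - Q else if k = 1 then 1 else 0)" for k
  have deg_c: "degree (c k) < degree Q" for k
    using degree_Q_minus_R degree_Q m_pos degree_minus[of "Q - R"] by (simp add: c_def)
  have "(\<Sum>k\<le>1. c k * Q ^ k) = R" by (simp add: c_def)
  then have qcoeff_R: "qcoeff Q R i = (if i \<le> 1 then c i else 0)" for i
    using qcoeff_qexpansion[OF degree_Q_pos, of c 1 i] deg_c by simp
  have "\<nu> (R - Q) = \<nu> (- Q + R)" by simp
  also have "\<dots> = Fin \<gamma>" using nu_add_eq[of "- Q" R] nu_Q nu_R \<gamma>_less_\<delta> by simp
  finally have "\<nu> (R - Q) = Fin \<gamma>" .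
  then have "qterm R i = (if i \<le> 1 then Fin \<gamma> else Pinf)" for i
    by (auto simp: qterm_eq qcoeff_R c_def nu_1 nu_0 le_Suc_eq)
  then show ?thesis by (simp add: qlead_def qterms_ge_def qcoeff_R c_def)
qed

lemma qlead_R_power: "qlead (R ^ j) (nsm j \<gamma>) j \<and> Fin (nsm j \<gamma>) < \<nu> ((qcoeff Q (R ^ j) j - 1) * Q ^ j)"
proof (induction j)
  case 0
  have "qlead 1 0 0" using qlead_small[of 1 0] m_pos nu_1 by simp
  moreover have "qcoeff Q 1 0 = 1" using qcoeff_small[OF degree_Q_pos, of 1] degree_Q m_pos by simp
  ultimately show ?case by (simp add: nu_0)
next
  case (Suc j)
  define u where "u = qcoeff Q (R ^ j) j"
  have "degree u < degree Q" unfolding u_def by (rule degree_qcoeff_less[OF degree_Q_pos])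
  then have "(u * qcoeff Q R 1) mod Q = u" using qlead_R by (simp add: mod_poly_less)
  then have prod: "qlead (R ^ Suc j) (nsm (Suc j) \<gamma>) (Suc j)
      \<and> Fin (nsm (Suc j) \<gamma>) < \<nu> ((qcoeff Q (R ^ Suc j) (Suc j) - u) * Q ^ Suc j)"
    using qlead_mult[OF conjunct1[OF Suc.IH] conjunct1[OF qlead_R]]
    by (simp add: u_def add.commute mult.commute)
  have "Fin (nsm j \<gamma> + \<gamma>) < \<nu> ((u - 1) * Q ^ j * Q)"
    using Fin_add_less_le[OF conjunct2[OF Suc.IH], of \<gamma> "Fin \<gamma>"] by (simp add: u_def nu_mult nu_Q)
  then have "Fin (nsm (Suc j) \<gamma>) < \<nu> ((u - 1) * Q ^ Suc j)"
    by (simp add: add.commute mult_ac)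
  with prod show ?case using nu_greater_diff_trans by blast
qed

lemma qlead_mult_R_power:
  assumes c: "c \<noteq> 0" "degree c < m" "\<nu> c = Fin \<kappa>"
  shows "qlead (c * R ^ j) (\<kappa> + nsm j \<gamma>) j
    \<and> Fin (\<kappa> + nsm j \<gamma>) < \<nu> ((qcoeff Q (c * R ^ j) j - c) * Q ^ j)"
proof -
  define u where "u = qcoeff Q (R ^ j) j"
  have prod: "qlead (c * R ^ j) (\<kappa> + nsm j \<gamma>) j
      \<and> Fin (\<kappa> + nsm j \<gamma>) < \<nu> ((qcoeff Q (c * R ^ j) j - (u * c) mod Q) * Q ^ j)"
    using qlead_mult_small[OF c conjunct1[OF qlead_R_power]] by (simp add: u_def mult.commute add.commute)
  have "Fin \<kappa> < \<nu> ((u * c) mod Q - c)"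
  proof (cases "u = 1")
    case False
    have "Fin (0 + nsm j \<gamma>) < \<nu> (u - 1) + Fin (nsm j \<gamma>)"
      using qlead_R_power[of j] by (simp add: u_def nu_mult_Q_power)
    then have pos: "Fin 0 < \<nu> (u - 1)" by (simp only: add_Fin_less_cancel flip: plus_extended.simps(1))
    have deg_u: "degree (u - 1) < m"
      using degree_qcoeff_less[OF degree_Q_pos] degree_Q m_pos by (simp add: u_def degree_diff_less)
    have "u * c = (u - 1) * c + c" by (simp add: algebra_simps)
    then have "(u * c) mod Q = ((u - 1) * c) mod Q + c"
      using c degree_Q by (simp add: poly_mod_add_left mod_poly_less)
    then have "(u * c) mod Q - c = ((u - 1) * c) mod Q" by simp
    moreover have "\<nu> (((u - 1) * c) mod Q) = \<nu> (u - 1) + \<nu> c"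
      using nu_mult_mod_Q[of "u - 1" c] False deg_u c by (simp add: nu_mult)
    ultimately show ?thesis using pos c(3) by (cases "\<nu> (u - 1)") simp_all
  qed (use c degree_Q in \<open>simp add: mod_poly_less nu_0\<close>)
  then have "Fin (\<kappa> + nsm j \<gamma>) < \<nu> (((u * c) mod Q - c) * Q ^ j)"
    unfolding nu_mult_Q_power by (rule Fin_add_less_le) simp
  with prod show ?thesis using nu_greater_diff_trans by blast
qed

end

context key_polynomial_pair begin

text \<open>\<open>Rval f j\<close> is \<open>\<nu>\<^sub>Q\<close> of the term \<open>f\<^sub>R\<^sub>,\<^sub>j R\<^sup>j\<close> (\<open>fin_val\<close> is only applied to the finite values
  of nonzero coefficients), and \<open>Rtop f\<close> is the largest index of a term of least value.\<close>

definition Rval :: "'a poly \<Rightarrow> nat \<Rightarrow> 'b" where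
  "Rval f j = fin_val (\<nu> (qcoeff R f j)) + nsm j \<gamma>"

definition Rmin :: "'a poly \<Rightarrow> 'b" where
  "Rmin f = Min (Rval f ` qsupp R f)"

definition Rtop :: "'a poly \<Rightarrow> nat" where
  "Rtop f = Max {j \<in> qsupp R f. Rval f j = Rmin f}"

lemma degree_R_pos: "0 < degree R"
  using degree_R m_pos by simp

lemma degree_qcoeff_R: "degree (qcoeff R f j) < m"
  using degree_qcoeff_less[OF degree_R_pos] degree_R by simp

lemma nu_qcoeff_R: "j \<in> qsupp R f \<Longrightarrow> \<nu> (qcoeff R f j) = Fin (Rval f j - nsm j \<gamma>)"
proof -
  assume "j \<in> qsupp R f"
  then obtain a where "\<nu> (qcoeff R f j) = Fin a"
    using small_nu_Fin[OF _ degree_qcoeff_R] by (auto simp: qsupp_def)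
  then show ?thesis by (simp add: Rval_def fin_val_def)
qed

lemma qlead_R_term:
  assumes "j \<in> qsupp R f"
  shows "qlead (qcoeff R f j * R ^ j) (Rval f j) j
    \<and> Fin (Rval f j) < \<nu> ((qcoeff Q (qcoeff R f j * R ^ j) j - qcoeff R f j) * Q ^ j)"
  using qlead_mult_R_power[OF _ degree_qcoeff_R nu_qcoeff_R[OF assms], of j] assms
  by (simp add: qsupp_def)

lemma nuQ_R_term: "nuQ \<nu> Q (qcoeff R f j * R ^ j) = (if j \<in> qsupp R f then Fin (Rval f j) else Pinf)"
  using qlead_nuQ_degQ[OF conjunct1[OF qlead_R_term]] qcoeff_eq_0_of_notin_qsupp[OF degree_R_pos, of j f]
  by (auto simp: nuQ_def nu_0)

lemma Rtop_spec:
  assumes "f \<noteq> 0"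
  shows "Rtop f \<in> qsupp R f" and "Rval f (Rtop f) = Rmin f"
    and "\<And>j. j \<in> qsupp R f \<Longrightarrow> Rmin f \<le> Rval f j"
    and "\<And>j. j \<in> qsupp R f \<Longrightarrow> Rval f j = Rmin f \<Longrightarrow> j \<le> Rtop f"
proof -
  have "Rmin f \<in> Rval f ` qsupp R f"
    unfolding Rmin_def using finite_qsupp[of R f] qsupp_nonempty[OF degree_R_pos assms] by (intro Min_in) simp_all
  then have "{j \<in> qsupp R f. Rval f j = Rmin f} \<noteq> {}" by auto
  then have "Rtop f \<in> {j \<in> qsupp R f. Rval f j = Rmin f}"
    unfolding Rtop_def by (intro Max_in) auto
  then show "Rtop f \<in> qsupp R f" and "Rval f (Rtop f) = Rmin f" by auto
  show "Rmin f \<le> Rval f j" if "j \<in> qsupp R f" for j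
    unfolding Rmin_def using that by simp
  show "j \<le> Rtop f" if "j \<in> qsupp R f" "Rval f j = Rmin f" for j
    unfolding Rtop_def using that by (intro Max_ge) auto
qed

lemma qlead_Rtop:
  assumes "f \<noteq> 0"
  shows "qlead f (Rmin f) (Rtop f)
    \<and> Fin (Rmin f) < \<nu> ((qcoeff Q f (Rtop f) - qcoeff R f (Rtop f)) * Q ^ Rtop f)"
proof -
  define J where "J = Rtop f"
  define T where "T j = qcoeff R f j * R ^ j" for j
  have sum: "qlead (\<Sum>j\<in>qsupp R f. T j) (Rval f J) J
      \<and> Fin (Rval f J) < \<nu> ((qcoeff Q (\<Sum>j\<in>qsupp R f. T j) J - qcoeff Q (T J) J) * Q ^ J)"
  proof (rule qlead_sum_min[where d = id, simplified])
    show "j < J" if "j \<in> qsupp R f" "j \<noteq> J" "Rval f j = Rval f J" for j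
      using Rtop_spec(2,4)[OF assms] that by (simp add: J_def order.not_eq_order_implies_strict)
    show "Rval f J \<le> Rval f j" if "j \<in> qsupp R f" for j
      using Rtop_spec(2,3)[OF assms] that by (simp add: J_def)
    show "qlead (T j) (Rval f j) j" if "j \<in> qsupp R f" for j
      using qlead_R_term[OF that] by (simp add: T_def)
  qed (use Rtop_spec(1)[OF assms] in \<open>simp_all add: J_def\<close>)
  have f: "f = (\<Sum>j\<in>qsupp R f. T j)" unfolding T_def by (rule qexpansion_qsupp[OF degree_R_pos])
  then show ?thesis
    using sum qlead_R_term[OF Rtop_spec(1)[OF assms]] Rtop_spec(2)[OF assms] nu_greater_diff_trans
    by (metis J_def T_def)
qed

lemma degQ_R_le_Rtop:
  assumes "f \<noteq> 0"
  shows "degQ \<nu> R f \<le> Rtop f"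
proof (rule degQ_le)
  define J where "J = Rtop f"
  have nu_term: "\<nu> (qcoeff R f j * R ^ j) = Fin (Rval f j - nsm j \<gamma> + nsm j \<delta>)" if "j \<in> qsupp R f" for j
    using nu_qcoeff_R[OF that] by (simp add: nu_mult nu_power[OF nu_R])
  show "J \<le> degree f" using Rtop_spec(1)[OF assms] by (simp add: J_def qsupp_def)
  fix i assume "J < i"
  show "\<nu> (qcoeff R f J * R ^ J) < \<nu> (qcoeff R f i * R ^ i)"
  proof (cases "i \<in> qsupp R f")
    case True
    have "Rval f i \<noteq> Rmin f" using Rtop_spec(4)[OF assms True] \<open>J < i\<close> by (auto simp: J_def)
    then have "Rval f J < Rval f i"
      using Rtop_spec(2)[OF assms] Rtop_spec(3)[OF assms True] by (simp add: J_def order.not_eq_order_implies_strict)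
    moreover have "nsm J (\<delta> - \<gamma>) \<le> nsm i (\<delta> - \<gamma>)"
      using \<open>J < i\<close> \<gamma>_less_\<delta> by (intro nsm_increasing) simp_all
    ultimately have "nsm J (\<delta> - \<gamma>) + Rval f J < nsm i (\<delta> - \<gamma>) + Rval f i"
      by (rule add_le_less_mono[rotated])
    then have "Rval f J - nsm J \<gamma> + nsm J \<delta> < Rval f i - nsm i \<gamma> + nsm i \<delta>"
      using nsm_add_distrib[of _ \<gamma> "\<delta> - \<gamma>"] by (simp add: algebra_simps)
    with True show ?thesis using nu_term Rtop_spec(1)[OF assms] by (simp add: J_def)
  qed (simp add: qcoeff_eq_0_of_notin_qsupp[OF degree_R_pos] nu_0 nu_term Rtop_spec(1)[OF assms] J_def)
qed

lemma expansion_in_R: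
  assumes "f \<noteq> 0"
  shows "let d = degQ \<nu> Q f in
           \<nu> (qcoeff Q f d) < \<nu> (qcoeff Q f d - qcoeff R f d)
         \<and> \<nu> (qcoeff Q f d) = \<nu> (qcoeff R f d)
         \<and> d = Max {j. nuQ \<nu> Q (qcoeff R f j * R ^ j) = nuQ \<nu> Q f}
         \<and> degQ \<nu> R f \<le> d"
proof -
  define J a c where "J = Rtop f" and "a = qcoeff Q f J" and "c = qcoeff R f J"
  have lead: "qlead f (Rmin f) J" and close: "Fin (Rmin f) < \<nu> ((a - c) * Q ^ J)"
    using qlead_Rtop[OF assms] by (simp_all add: J_def a_def c_def)
  have d: "degQ \<nu> Q f = J" and nuQ_f: "nuQ \<nu> Q f = Fin (Rmin f)"
    using qlead_nuQ_degQ[OF lead] by simp_all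
  have "\<nu> a + Fin (nsm J \<gamma>) < \<nu> (a - c) + Fin (nsm J \<gamma>)"
    using lead close by (simp add: qlead_def qterm_def a_def nu_mult_Q_power)
  then have less: "\<nu> a < \<nu> (a - c)" by (simp only: add_Fin_less_cancel)
  have "{j. nuQ \<nu> Q (qcoeff R f j * R ^ j) = nuQ \<nu> Q f} = {j \<in> qsupp R f. Rval f j = Rmin f}"
    by (auto simp: nuQ_f nuQ_R_term)
  then show ?thesis
    using less nu_eq_of_less_diff[OF less] d degQ_R_le_Rtop[OF assms]
    by (simp add: Let_def J_def a_def c_def Rtop_def)
qed

end

section \<open>Key polynomials satisfy the locale assumptions\<close>

lemma poly_valuationI: "is_poly_valuation \<nu> \<Longrightarrow> poly_valuation \<nu>"
  unfolding is_poly_valuation_def poly_valuation_def by blast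

lemma degree_diff_less_of_monic:
  fixes p q :: "'a::comm_ring_1 poly"
  assumes "lead_coeff p = 1" "lead_coeff q = 1" "degree p = degree q" "0 < degree p"
  shows "degree (p - q) < degree p"
proof -
  have "degree (p - q) \<le> degree p - 1"
  proof (rule degree_le, intro allI impI)
    fix i assume "degree p - 1 < i"
    then consider "i = degree p" | "degree p < i" by linarith
    then show "coeff (p - q) i = 0" using assms by cases (simp_all add: coeff_eq_0)
  qed
  with assms(4) show ?thesis by linarith
qed

context poly_valuation begin

lemma nu_const_Fin:
  assumes "g \<noteq> 0" "degree g = 0"
  shows "\<exists>a. \<nu> g = Fin a"
proof -
  obtain c where g: "g = [:c:]" and c: "c \<noteq> 0" using assms by (metis degree_eq_zeroE pCons_0_0)
  then have "g * [:inverse c:] = 1" by (simp add: one_pCons)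
  then have "\<nu> g + \<nu> [:inverse c:] = Fin 0" using nu_mult nu_1 by metis
  then show ?thesis
    using nu_not_Minf[of g] nu_not_Minf[of "[:inverse c:]"]
    by (cases "\<nu> g"; cases "\<nu> [:inverse c:]") simp_all
qed

lemma level_eq_Max:
  assumes "0 < degree f" "\<nu> f = Fin a"
  shows "level \<nu> f = Max ((\<lambda>s. case \<nu> (hasse s f) of
      Fin b \<Rightarrow> Fin (divn s (a - b)) | Pinf \<Rightarrow> Minf | Minf \<Rightarrow> Minf) ` {1..degree f})"
proof -
  have fin_val: "fin_val (\<nu> f) = a" using assms(2) by (simp add: fin_val_def)
  show ?thesis using assms unfolding level_def fin_val by simp
qed

lemma level_ge_entry:
  assumes "0 < s" "s \<le> degree f" "\<nu> f = Fin a" "\<nu> (hasse s f) = Fin \<beta>"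
  shows "Fin (divn s (a - \<beta>)) \<le> level \<nu> f"
proof -
  have "0 < degree f" using assms(1,2) by linarith
  from level_eq_Max[OF this assms(3)] show ?thesis
    by (auto intro!: Max_ge rev_image_eqI[of s] simp: assms Suc_le_eq)
qed

lemma level_attained:
  assumes "0 < degree f" "\<nu> f = Fin a" "level \<nu> f \<noteq> Minf"
  obtains s \<beta> where "0 < s" "s \<le> degree f" "\<nu> (hasse s f) = Fin \<beta>"
    and "level \<nu> f = Fin (divn s (a - \<beta>))"
proof -
  have "level \<nu> f \<in> (\<lambda>s. case \<nu> (hasse s f) of
      Fin b \<Rightarrow> Fin (divn s (a - b)) | Pinf \<Rightarrow> Minf | Minf \<Rightarrow> Minf) ` {1..degree f}"
    unfolding level_eq_Max[OF assms(1,2)] using assms(1) by (intro Max_in) auto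
  then obtain s where s: "s \<in> {1..degree f}" and lev: "level \<nu> f = (case \<nu> (hasse s f) of
      Fin b \<Rightarrow> Fin (divn s (a - b)) | Pinf \<Rightarrow> Minf | Minf \<Rightarrow> Minf)" by blast
  then obtain \<beta> where "\<nu> (hasse s f) = Fin \<beta>"
    using assms(3) by (cases "\<nu> (hasse s f)") auto
  with s lev show thesis by (intro that[of s \<beta>]) auto
qed

context
  assumes divisible: "\<forall>g::'b. \<forall>n>0. \<exists>h. nsm n h = g"
begin

lemma nu_hasse_ge_of_level_le:
  assumes f: "\<nu> f = Fin a" and lev: "level \<nu> f \<le> Fin e"
  shows "Fin (a - nsm s e) \<le> \<nu> (hasse s f)"
proof -
  consider "s = 0" | "degree f < s" | "0 < s" "s \<le> degree f" by linarith
  then show ?thesis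
  proof cases
    case 3
    show ?thesis
    proof (cases "\<nu> (hasse s f)")
      case (Fin \<beta>)
      have "Fin (divn s (a - \<beta>)) \<le> Fin e" using level_ge_entry[OF 3 f Fin] lev by (rule order_trans)
      then have "a - \<beta> \<le> nsm s e" using divn_le_iff[OF divisible 3(1)] by simp
      with Fin show ?thesis by (simp add: algebra_simps)
    qed (simp_all add: nu_not_Minf)
  qed (simp_all add: f hasse_eq_0 nu_0)
qed

lemma level_below_of_level_less:
  assumes f: "\<nu> f = Fin a" and lev: "level \<nu> f < Fin e"
  shows "level_below \<nu> e f a"
  unfolding level_below_def
proof (intro conjI allI impI)
  fix s :: nat assume "1 \<le> s"
  then consider "degree f < s" | "0 < s" "s \<le> degree f" by linarith
  then show "Fin (a - nsm s e) < \<nu> (hasse s f)"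
  proof cases
    case 2
    show ?thesis
    proof (cases "\<nu> (hasse s f)")
      case (Fin \<beta>)
      have "Fin (divn s (a - \<beta>)) < Fin e" using level_ge_entry[OF 2 f Fin] lev by (rule le_less_trans)
      then have "a - \<beta> < nsm s e" using divn_less_iff[OF divisible 2(1)] by simp
      with Fin show ?thesis by (simp add: algebra_simps)
    qed (simp_all add: nu_not_Minf)
  qed (simp add: hasse_eq_0 nu_0)
qed (rule f)

lemma small_level_below_of_key_poly:
  assumes key: "key_poly \<nu> Q" and lev: "level \<nu> Q = Fin e" and g: "g \<noteq> 0" "degree g < degree Q"
  shows "\<exists>a. level_below \<nu> e g a"
proof -
  have lev_g: "level \<nu> g < Fin e" using key g lev by (simp add: key_poly_def)
  obtain a where "\<nu> g = Fin a"
  proof (cases "degree g = 0")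
    case False
    then have "\<nu> g \<noteq> Pinf" using lev_g by (auto simp: level_def)
    then show ?thesis using nu_not_Minf[of g] that by (cases "\<nu> g") auto
  qed (use nu_const_Fin g that in blast)
  then show ?thesis using level_below_of_level_less lev_g by blast
qed

lemma key_polynomial_of_key_poly:
  assumes key: "key_poly \<nu> Q" and deg: "degree Q = m" and m: "0 < m" and nu_Q: "\<nu> Q = Fin \<gamma>"
  obtains e where "key_polynomial \<nu> Q m \<gamma> e"
proof -
  have "level \<nu> 1 < level \<nu> Q" using key deg m by (simp add: key_poly_def)
  then have "level \<nu> Q \<noteq> Minf" by (simp add: level_def)
  then obtain b \<beta> where b: "0 < b" and hb: "\<nu> (hasse b Q) = Fin \<beta>"
    and lev: "level \<nu> Q = Fin (divn b (\<gamma> - \<beta>))"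
    using level_attained[of Q \<gamma>] deg m nu_Q by blast
  define e where "e = divn b (\<gamma> - \<beta>)"
  have "nsm b e = \<gamma> - \<beta>" unfolding e_def by (rule nsm_divn[OF divisible b])
  then have hasse_eq: "\<exists>b\<ge>1. \<nu> (hasse b Q) = Fin (\<gamma> - nsm b e)"
    using hb b by (intro exI[of _ b]) simp
  have hasse_ge: "Fin (\<gamma> - nsm s e) \<le> \<nu> (hasse s Q)" for s
    using nu_hasse_ge_of_level_le[OF nu_Q] lev by (simp add: e_def)
  have small: "\<exists>a. level_below \<nu> e g a" if "g \<noteq> 0" "degree g < m" for g
    using small_level_below_of_key_poly[OF key, of e g] that lev deg by (simp add: e_def)
  have "key_polynomial \<nu> Q m \<gamma> e"
    unfolding key_polynomial_def key_polynomial_axioms_def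
    using poly_valuation_axioms deg m nu_Q small hasse_ge hasse_eq by auto
  then show thesis by (rule that)
qed

end

end

theorem mainTheorem2:
  fixes v :: "'a::field \<Rightarrow> 'b::linordered_ab_group_add extended"
    and \<nu> :: "'a poly \<Rightarrow> 'b extended"
    and m :: nat and QQ :: "'a poly set" and f Q R :: "'a poly"
  assumes divisible: "\<forall>g::'b. \<forall>n>0. \<exists>h. nsm n h = g"
    and val_v: "is_field_valuation v"
    and val_nu: "is_poly_valuation \<nu>"
    and ext: "extends_val \<nu> v"
    and wspec: "well_specified v \<nu>"
    and m_pos: "1 \<le> m"
    and Psi_ne: "Psi \<nu> m \<noteq> {}"
    and Psi_nomax: "\<forall>P\<in>Psi \<nu> m. \<exists>P'\<in>Psi \<nu> m. \<nu> P < \<nu> P'"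
    and QQ_sub: "QQ \<subseteq> Psi \<nu> m"
    and QQ_inj: "inj_on \<nu> QQ"
    and QQ_wo: "\<forall>S\<subseteq>QQ. S \<noteq> {} \<longrightarrow> (\<exists>P\<in>S. \<forall>P'\<in>S. \<nu> P \<le> \<nu> P')"
    and QQ_cof: "\<forall>P\<in>Psi \<nu> m. \<exists>P'\<in>QQ. \<nu> P \<le> \<nu> P'"
    and Q_in: "Q \<in> QQ" and R_in: "R \<in> QQ" and QR: "\<nu> Q < \<nu> R"
    and f_nz: "f \<noteq> 0"
  shows "let d = degQ \<nu> Q f in
           \<nu> (qcoeff Q f d) < \<nu> (qcoeff Q f d - qcoeff R f d)
         \<and> \<nu> (qcoeff Q f d) = \<nu> (qcoeff R f d)
         \<and> d = Max {j. nuQ \<nu> Q (qcoeff R f j * R ^ j) = nuQ \<nu> Q f}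
         \<and> degQ \<nu> R f \<le> d"
proof -
  interpret poly_valuation \<nu> using val_nu by (rule poly_valuationI)
  have Q: "key_poly \<nu> Q" "degree Q = m" and R: "key_poly \<nu> R" "degree R = m"
    using QQ_sub Q_in R_in by (auto simp: Psi_def)
  obtain P where "\<nu> R < \<nu> P" using Psi_nomax QQ_sub R_in by blast
  then obtain \<delta> where nu_R: "\<nu> R = Fin \<delta>" using nu_not_Minf[of R] by (cases "\<nu> R") auto
  obtain \<gamma> where nu_Q: "\<nu> Q = Fin \<gamma>" using QR nu_not_Minf[of Q] by (cases "\<nu> Q") auto
  obtain e where key: "key_polynomial \<nu> Q m \<gamma> e"
    using key_polynomial_of_key_poly[OF divisible Q _ nu_Q] m_pos by auto
  have "degree (Q - R) < m"
    using degree_diff_less_of_monic[of Q R] Q R m_pos by (simp add: key_poly_def)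
  then interpret key_polynomial_pair \<nu> Q m \<gamma> e R \<delta>
    using key nu_R QR nu_Q by (simp add: key_polynomial_pair_def key_polynomial_pair_axioms_def)
  show ?thesis by (rule expansion_in_R[OF f_nz])
qed

end
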